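(* Let $n>24$, $0<\epsilon<\frac13$, $\delta>0$, and $m=\epsilon^{-2}n^{1+\delta}$ (assumed to be an integer). Then $$\mathsf P\left\{\left|\sum_{i=1}^n \frac{k_i(x)(k_i(x)-1)}{m(m-1)}\cdot\frac{1}{\|p\|^2}-1\right|\le 22\,\epsilon\right\}\ \ge\ 1-\frac{10}{9}e^{-n^{\delta}}.$$
   Context: Standing setup: $U$ is a finite set (the key space) with a probability measure $q$; $T=\{1,\dots,n\}$; $h:U\to T$ is an arbitrary function. $p_i=\sum_{u\in h^{-1}(i)}q(u)$ and $\|p\|^2=\sum_{i=1}^n p_i^2$. $U^m$ carries the product measure $q^m$, and $\mathsf P$ denotes probability under $q^m$ of the event for $x=(x_1,\dots,x_m)\in U^m$. $k_i(x)=|\{j: h(x_j)=i\}|$. *)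

theory Defs
  imports "HOL-Analysis.Analysis"
begin

text \<open>Key space U (finite set) with probability weights q; hash function h : U -> {1..n}.\<close>

definition pbin :: "'u set \<Rightarrow> ('u \<Rightarrow> real) \<Rightarrow> ('u \<Rightarrow> nat) \<Rightarrow> nat \<Rightarrow> real" where
  "pbin U q h i = (\<Sum>u\<in>{u\<in>U. h u = i}. q u)"

definition psqnorm :: "'u set \<Rightarrow> ('u \<Rightarrow> real) \<Rightarrow> ('u \<Rightarrow> nat) \<Rightarrow> nat \<Rightarrow> real" where
  "psqnorm U q h n = (\<Sum>i=1..n. (pbin U q h i)\<^sup>2)"

text \<open>k_i(x) for x = (x_0,...,x_{m-1}) in U^m, represented as x : nat => 'u on {..<m}.\<close>
definition kcount :: "('u \<Rightarrow> nat) \<Rightarrow> nat \<Rightarrow> (nat \<Rightarrow> 'u) \<Rightarrow> nat \<Rightarrow> nat" where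
  "kcount h m x i = card {j\<in>{..<m}. h (x j) = i}"

definition prob_prod :: "'u set \<Rightarrow> ('u \<Rightarrow> real) \<Rightarrow> nat \<Rightarrow> ((nat \<Rightarrow> 'u) \<Rightarrow> bool) \<Rightarrow> real" where
  "prob_prod U q m P = (\<Sum>x\<in>{x\<in>PiE {..<m} (\<lambda>_. U). P x}. \<Prod>j<m. q (x j))"

end

(*
  The normalised statistic is the U-statistic Z = (number of colliding ordered pairs) / (m (m - 1))
  of the collision kernel [h u = h v], whose mean is ||p||^2. Following Hoeffding, Z is an average,
  over all orderings of the sample, of means of m div 2 independent collision indicators, one per
  disjoint pair of positions. By Jensen's inequality the moment generating function of Z is
  therefore bounded by that of such a mean: E exp (theta Z) <= exp (K ||p||^2 (e^(theta/K) - 1))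
  with K = m div 2. A two-sided Chernoff bound with theta = +- eps K then bounds the probability of
  a relative deviation beyond 22 eps by 2 exp (-21 eps^2 K ||p||^2), and ||p||^2 >= 1/n together
  with eps^2 m = n^(1+delta) makes this exponent at least 2 n^delta.
*)
theory Submission
  imports Defs "HOL-Combinatorics.Permutations"
begin

definition expect_prod :: "'u set \<Rightarrow> ('u \<Rightarrow> real) \<Rightarrow> nat \<Rightarrow> ((nat \<Rightarrow> 'u) \<Rightarrow> real) \<Rightarrow> real" where
  "expect_prod U q m F = (\<Sum>x\<in>PiE {..<m} (\<lambda>_. U). (\<Prod>j<m. q (x j)) * F x)"

lemma prob_prod_eq_expect_prod:
  assumes "finite U"
  shows "prob_prod U q m P = expect_prod U q m (\<lambda>x. if P x then 1 else 0)"
  unfolding prob_prod_def expect_prod_def sum.inter_filter[OF finite_PiE[OF finite_lessThan assms]]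
  by (intro sum.cong) auto

lemma prob_prod_cong:
  "(\<And>x. x \<in> PiE {..<m} (\<lambda>_. U) \<Longrightarrow> P x = Q x) \<Longrightarrow> prob_prod U q m P = prob_prod U q m Q"
  unfolding prob_prod_def by (intro sum.cong) auto

lemma expect_prod_0: "expect_prod U q 0 F = F (\<lambda>_. undefined)"
  unfolding expect_prod_def by simp

lemma expect_prod_Suc:
  assumes "finite U"
  shows "expect_prod U q (Suc m) F = expect_prod U q m (\<lambda>x. \<Sum>u\<in>U. q u * F (x(m := u)))"
proof -
  let ?A = "PiE {..<m} (\<lambda>_. U)"
  have split: "PiE {..<Suc m} (\<lambda>_. U) = (\<lambda>(u, x). x(m := u)) ` (U \<times> ?A)"
    by (simp add: lessThan_Suc PiE_insert_eq)
  have inj: "inj_on (\<lambda>(u, x). x(m := u)) (U \<times> ?A)"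
    using inj_combinator[of m "{..<m}" "\<lambda>_. U"] by simp
  have weight: "(\<Prod>j<Suc m. q ((x(m := u)) j)) = q u * (\<Prod>j<m. q (x j))" for x u
  proof -
    have "(\<Prod>j<m. q ((x(m := u)) j)) = (\<Prod>j<m. q (x j))" by (rule prod.cong) auto
    then show ?thesis by (simp add: lessThan_Suc)
  qed
  have "expect_prod U q (Suc m) F = (\<Sum>(u, x)\<in>U \<times> ?A. q u * (\<Prod>j<m. q (x j)) * F (x(m := u)))"
    unfolding expect_prod_def split
    by (subst sum.reindex[OF inj]) (simp add: case_prod_beta weight mult_ac)
  also have "\<dots> = (\<Sum>u\<in>U. \<Sum>x\<in>?A. q u * (\<Prod>j<m. q (x j)) * F (x(m := u)))"
    by (simp add: sum.cartesian_product)
  also have "\<dots> = (\<Sum>x\<in>?A. \<Sum>u\<in>U. q u * (\<Prod>j<m. q (x j)) * F (x(m := u)))"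
    by (rule sum.swap)
  finally show ?thesis
    unfolding expect_prod_def by (simp add: sum_distrib_left mult_ac)
qed

lemma expect_prod_cmult: "expect_prod U q m (\<lambda>x. c * F x) = c * expect_prod U q m F"
  unfolding expect_prod_def by (simp add: sum_distrib_left mult_ac)

lemma expect_prod_add: "expect_prod U q m (\<lambda>x. F x + G x) = expect_prod U q m F + expect_prod U q m G"
  unfolding expect_prod_def by (simp add: sum.distrib distrib_left)

lemma expect_prod_diff: "expect_prod U q m (\<lambda>x. F x - G x) = expect_prod U q m F - expect_prod U q m G"
  unfolding expect_prod_def by (simp add: sum_subtractf right_diff_distrib)

lemma expect_prod_sum:
  "finite A \<Longrightarrow> expect_prod U q m (\<lambda>x. \<Sum>a\<in>A. F a x) = (\<Sum>a\<in>A. expect_prod U q m (F a))"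
  unfolding expect_prod_def by (simp add: sum_distrib_left sum.swap[of _ A])

lemma expect_prod_mono:
  assumes "\<forall>u\<in>U. q u \<ge> 0" and "\<And>x. x \<in> PiE {..<m} (\<lambda>_. U) \<Longrightarrow> F x \<le> G x"
  shows "expect_prod U q m F \<le> expect_prod U q m G"
  unfolding expect_prod_def
proof (rule sum_mono)
  fix x assume x: "x \<in> PiE {..<m} (\<lambda>_. U)"
  have "(\<Prod>j<m. q (x j)) \<ge> 0" using x assms(1) by (intro prod_nonneg) auto
  then show "(\<Prod>j<m. q (x j)) * F x \<le> (\<Prod>j<m. q (x j)) * G x"
    using assms(2)[OF x] by (rule mult_left_mono[rotated])
qed

lemma expect_prod_const:
  assumes "finite U" and "(\<Sum>u\<in>U. q u) = 1"
  shows "expect_prod U q m (\<lambda>_. c) = c"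
  by (induction m) (simp_all add: expect_prod_0 expect_prod_Suc assms flip: sum_distrib_right)

lemma expect_prod_prefix:
  assumes "finite U" and "(\<Sum>u\<in>U. q u) = 1" and "k \<le> m"
    and "\<And>x y. (\<forall>j<k. x j = y j) \<Longrightarrow> F x = F y"
  shows "expect_prod U q m F = expect_prod U q k F"
  using assms(3)
proof (induction m rule: dec_induct)
  case (step m)
  have "F (x(m := u)) = F x" for x u using assms(4)[of "x(m := u)" x] step(1) by auto
  then show ?case using step assms(1,2) by (simp add: expect_prod_Suc flip: sum_distrib_right)
qed simp

lemma expect_prod_pairs:
  assumes "finite U" and "(\<Sum>u\<in>U. q u) = 1" and "2 * K \<le> m"
  shows "expect_prod U q m (\<lambda>x. \<Prod>r<K. g (x (2*r)) (x (2*r+1)))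
       = (\<Sum>u\<in>U. \<Sum>v\<in>U. q u * q v * g u v) ^ K"
proof -
  let ?F = "\<lambda>K x. \<Prod>r<K. g (x (2*r)) (x (2*r+1))"
  let ?c = "\<Sum>u\<in>U. \<Sum>v\<in>U. q u * q v * g u v"
  have "expect_prod U q (2 * K) (?F K) = ?c ^ K" for K
  proof (induction K)
    case (Suc K)
    have upd: "?F (Suc K) (x(2*K := u, Suc (2*K) := v)) = ?F K x * g u v" for x u v
    proof -
      have "?F K (x(2*K := u, Suc (2*K) := v)) = ?F K x" by (rule prod.cong) auto
      then show ?thesis by simp
    qed
    have "expect_prod U q (2 * Suc K) (?F (Suc K))
        = expect_prod U q (2*K) (\<lambda>x. \<Sum>u\<in>U. q u * (\<Sum>v\<in>U. q v * ?F (Suc K) (x(2*K := u, Suc (2*K) := v))))"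
      using assms(1) by (simp only: mult_Suc_right add_2_eq_Suc expect_prod_Suc)
    also have "\<dots> = expect_prod U q (2*K) (\<lambda>x. ?c * ?F K x)"
      by (simp only: upd) (simp add: sum_distrib_left sum_distrib_right mult_ac)
    finally show ?case using Suc.IH by (simp add: expect_prod_cmult)
  qed (simp add: expect_prod_0)
  moreover have "expect_prod U q m (?F K) = expect_prod U q (2 * K) (?F K)"
    by (rule expect_prod_prefix[OF assms]) (intro prod.cong; auto)
  ultimately show ?thesis by simp
qed

lemma expect_prod_permute:
  assumes "\<sigma> permutes {..<m}"
  shows "expect_prod U q m (\<lambda>x. F (x \<circ> \<sigma>)) = expect_prod U q m F"
proof -
  let ?A = "PiE {..<m} (\<lambda>_. U)"
  have closed: "x \<circ> \<tau> \<in> ?A" if "x \<in> ?A" "\<tau> permutes {..<m}" for x \<tau>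
    using that permutes_in_image[OF that(2)] by (auto simp: PiE_iff extensional_def permutes_not_in)
  have bij: "bij_betw (\<lambda>x. x \<circ> \<sigma>) ?A ?A"
  proof (rule bij_betwI[where g = "\<lambda>x. x \<circ> inv \<sigma>"])
    show "(\<lambda>x. x \<circ> \<sigma>) \<in> ?A \<rightarrow> ?A" "(\<lambda>x. x \<circ> inv \<sigma>) \<in> ?A \<rightarrow> ?A"
      using closed assms permutes_inv[OF assms] by auto
    show "x \<circ> \<sigma> \<circ> inv \<sigma> = x" "x \<circ> inv \<sigma> \<circ> \<sigma> = x" for x
      using permutes_inv_o[OF assms] by (simp_all add: comp_assoc)
  qed
  have weight: "(\<Prod>j<m. q (x (\<sigma> j))) = (\<Prod>j<m. q (x j))" for x
    using prod.permute[OF assms, of "\<lambda>j. q (x j)"] by (simp add: o_def)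
  show ?thesis
    unfolding expect_prod_def
    using sum.reindex_bij_betw[OF bij, of "\<lambda>y. (\<Prod>j<m. q (y j)) * F y"] by (simp add: weight)
qed

lemma sum_permutations_pair_shift:
  assumes "a < m" "b < m" "a \<noteq> b" "a' < m" "b' < m" "a' \<noteq> b'"
  shows "(\<Sum>\<sigma>\<in>{\<sigma>. \<sigma> permutes {..<m}}. f (\<sigma> a) (\<sigma> b))
       = (\<Sum>\<sigma>\<in>{\<sigma>. \<sigma> permutes {..<m}}. f (\<sigma> a') (\<sigma> b'))"
proof -
  define b'' where "b'' = Transposition.transpose a a' b"
  define \<tau> where "\<tau> = Transposition.transpose b'' b' \<circ> Transposition.transpose a a'"
  have "b'' < m" "b'' \<noteq> a'"
    using assms unfolding b''_def by (auto simp: Transposition.transpose_def)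
  then have "\<tau> a = a'" "\<tau> b = b'" "\<tau> permutes {..<m}"
    using assms unfolding \<tau>_def b''_def
    by (auto simp: Transposition.transpose_def intro!: permutes_compose permutes_swap_id)
  then show ?thesis
    using sum_permutations_compose_right[of \<tau> "{..<m}" "\<lambda>\<sigma>. f (\<sigma> a) (\<sigma> b)"] by simp
qed

lemma sum_off_diagonal_permute:
  assumes "\<sigma> permutes {..<m}"
  shows "(\<Sum>a<m. \<Sum>b\<in>{..<m}-{a}. f (\<sigma> a) (\<sigma> b)) = (\<Sum>j<m. \<Sum>l\<in>{..<m}-{j}. f j l)"
proof -
  have inj: "inj_on \<sigma> X" for X
    using permutes_inj[OF assms] by (auto intro: inj_on_subset)
  have image: "\<sigma> ` ({..<m} - {a}) = {..<m} - {\<sigma> a}" for a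
    using permutes_image[OF assms] permutes_inj[OF assms] by (auto simp: inj_eq)
  have "(\<Sum>a<m. \<Sum>b\<in>{..<m}-{a}. f (\<sigma> a) (\<sigma> b)) = (\<Sum>a<m. \<Sum>l\<in>{..<m}-{\<sigma> a}. f (\<sigma> a) l)"
  proof (rule sum.cong[OF refl])
    fix a
    show "(\<Sum>b\<in>{..<m}-{a}. f (\<sigma> a) (\<sigma> b)) = (\<Sum>l\<in>{..<m}-{\<sigma> a}. f (\<sigma> a) l)"
      using sum.reindex[OF inj[of "{..<m}-{a}"], of "f (\<sigma> a)"] image[of a] by simp
  qed
  also have "\<dots> = (\<Sum>j<m. \<Sum>l\<in>{..<m}-{j}. f j l)"
    using sum.reindex[OF inj[of "{..<m}"], of "\<lambda>j. \<Sum>l\<in>{..<m}-{j}. f j l"] permutes_image[OF assms]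
    by simp
  finally show ?thesis .
qed

lemma sum_permutations_pair:
  fixes f :: "nat \<Rightarrow> nat \<Rightarrow> real"
  assumes "a < m" "b < m" "a \<noteq> b"
  shows "real m * (real m - 1) * (\<Sum>\<sigma>\<in>{\<sigma>. \<sigma> permutes {..<m}}. f (\<sigma> a) (\<sigma> b))
       = fact m * (\<Sum>j<m. \<Sum>l\<in>{..<m}-{j}. f j l)"
proof -
  let ?P = "{\<sigma>. \<sigma> permutes {..<m}}"
  let ?A = "\<lambda>a b. \<Sum>\<sigma>\<in>?P. f (\<sigma> a) (\<sigma> b)"
  have "m \<ge> 2" using assms by auto
  have "real m * (real m - 1) * ?A a b = (\<Sum>a'<m. \<Sum>b'\<in>{..<m}-{a'}. ?A a b)"
    using \<open>m \<ge> 2\<close> by (simp add: card_Diff_singleton of_nat_diff)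
  also have "\<dots> = (\<Sum>a'<m. \<Sum>b'\<in>{..<m}-{a'}. ?A a' b')"
    using assms by (intro sum.cong refl sum_permutations_pair_shift) auto
  also have "\<dots> = (\<Sum>\<sigma>\<in>?P. \<Sum>a'<m. \<Sum>b'\<in>{..<m}-{a'}. f (\<sigma> a') (\<sigma> b'))"
    by (simp add: sum.swap[of _ ?P])
  also have "\<dots> = fact m * (\<Sum>j<m. \<Sum>l\<in>{..<m}-{j}. f j l)"
    by (simp add: sum_off_diagonal_permute card_permutations)
  finally show ?thesis .
qed

definition collision_stat :: "('u \<Rightarrow> 'b) \<Rightarrow> nat \<Rightarrow> (nat \<Rightarrow> 'u) \<Rightarrow> real" where
  "collision_stat h m x =
     (\<Sum>j<m. \<Sum>l\<in>{..<m}-{j}. if h (x j) = h (x l) then 1 else 0) / (real m * (real m - 1))"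

definition collision_prob :: "'u set \<Rightarrow> ('u \<Rightarrow> real) \<Rightarrow> ('u \<Rightarrow> 'b) \<Rightarrow> real" where
  "collision_prob U q h = (\<Sum>u\<in>U. \<Sum>v\<in>U. q u * q v * (if h u = h v then 1 else 0))"

text \<open>Hoeffding's representation of a U-statistic: an average, over all orderings of the
  sample, of sums of \<open>m div 2\<close> terms that involve disjoint pairs of coordinates.\<close>

lemma collision_stat_permutation_average:
  assumes "m \<ge> 2"
  shows "collision_stat h m x = (\<Sum>\<sigma>\<in>{\<sigma>. \<sigma> permutes {..<m}}. \<Sum>r<m div 2.
           if h (x (\<sigma> (2*r))) = h (x (\<sigma> (2*r+1))) then 1 else 0) / (real (m div 2) * fact m)"
proof -
  let ?P = "{\<sigma>. \<sigma> permutes {..<m}}"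
  let ?I = "\<lambda>j l. if h (x j) = h (x l) then 1 else (0::real)"
  let ?S = "\<Sum>j<m. \<Sum>l\<in>{..<m}-{j}. ?I j l"
  have mm: "real m * (real m - 1) > 0" using assms by auto
  have "(\<Sum>\<sigma>\<in>?P. \<Sum>r<m div 2. ?I (\<sigma> (2*r)) (\<sigma> (2*r+1)))
      = (\<Sum>r<m div 2. \<Sum>\<sigma>\<in>?P. ?I (\<sigma> (2*r)) (\<sigma> (2*r+1)))"
    by (rule sum.swap)
  also have "\<dots> = (\<Sum>r<m div 2. fact m * ?S / (real m * (real m - 1)))"
  proof (rule sum.cong[OF refl])
    fix r assume "r \<in> {..<m div 2}"
    then have "(\<Sum>\<sigma>\<in>?P. ?I (\<sigma> (2*r)) (\<sigma> (2*r+1))) * (real m * (real m - 1)) = fact m * ?S"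
      using sum_permutations_pair[of "2*r" m "2*r+1" ?I] by (simp add: mult.commute)
    then show "(\<Sum>\<sigma>\<in>?P. ?I (\<sigma> (2*r)) (\<sigma> (2*r+1))) = fact m * ?S / (real m * (real m - 1))"
      using mm assms by (intro eq_divide_imp) auto
  qed
  finally show ?thesis
    using assms unfolding collision_stat_def by (simp add: field_simps)
qed

lemma exp_collision_stat_le_permutation_average:
  assumes "m \<ge> 2"
  shows "exp (\<theta> * collision_stat h m x) \<le> (\<Sum>\<sigma>\<in>{\<sigma>. \<sigma> permutes {..<m}}. (1 / fact m) *
           exp (\<theta> / real (m div 2) * (\<Sum>r<m div 2. if h (x (\<sigma> (2*r))) = h (x (\<sigma> (2*r+1))) then 1 else 0)))"
proof -
  let ?P = "{\<sigma>. \<sigma> permutes {..<m}}"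
  let ?T = "\<lambda>\<sigma>. \<Sum>r<m div 2. if h (x (\<sigma> (2*r))) = h (x (\<sigma> (2*r+1))) then 1 else (0::real)"
  have "finite ?P" and "card ?P = fact m"
    by (simp_all add: finite_permutations card_permutations)
  have "?P \<noteq> {}"
    using permutes_id by blast
  have "(\<Sum>\<sigma>\<in>?P. (1 / fact m) *\<^sub>R (\<theta> / real (m div 2) * ?T \<sigma>))
      = 1 / fact m * (\<theta> / real (m div 2)) * (\<Sum>\<sigma>\<in>?P. ?T \<sigma>)"
    unfolding real_scaleR_def sum_distrib_left by (simp only: mult.assoc)
  also have "\<dots> = \<theta> * collision_stat h m x"
    using collision_stat_permutation_average[OF assms, of h x] by simp
  finally have "\<theta> * collision_stat h m x = (\<Sum>\<sigma>\<in>?P. (1 / fact m) *\<^sub>R (\<theta> / real (m div 2) * ?T \<sigma>))" ..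
  then show ?thesis
    using convex_on_sum[OF \<open>finite ?P\<close> \<open>?P \<noteq> {}\<close> exp_convex, of "\<lambda>_. 1 / fact m"
        "\<lambda>\<sigma>. \<theta> / real (m div 2) * ?T \<sigma>"] \<open>card ?P = fact m\<close> by (simp add: mult_ac)
qed

lemma collision_pair_exp_le:
  assumes "(\<Sum>u\<in>U. q u) = 1"
  shows "(\<Sum>u\<in>U. \<Sum>v\<in>U. q u * q v * exp (\<theta> * (if h u = h v then 1 else 0)))
       \<le> exp (collision_prob U q h * (exp \<theta> - 1))"
proof -
  have "(\<Sum>u\<in>U. \<Sum>v\<in>U. q u * q v * exp (\<theta> * (if h u = h v then 1 else 0)))
      = (\<Sum>u\<in>U. \<Sum>v\<in>U. q u * q v + q u * q v * (if h u = h v then 1 else 0) * (exp \<theta> - 1))"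
    by (intro sum.cong refl) (simp add: algebra_simps)
  also have "\<dots> = (\<Sum>u\<in>U. q u) * (\<Sum>v\<in>U. q v) + collision_prob U q h * (exp \<theta> - 1)"
    unfolding collision_prob_def by (simp add: sum.distrib sum_distrib_left sum_distrib_right mult_ac)
  also have "\<dots> \<le> exp (collision_prob U q h * (exp \<theta> - 1))"
    using assms exp_ge_add_one_self by simp
  finally show ?thesis .
qed

lemma expect_prod_exp_collision_stat_le:
  assumes U: "finite U" and q0: "\<forall>u\<in>U. q u \<ge> 0" and q1: "(\<Sum>u\<in>U. q u) = 1"
    and m: "m \<ge> 2"
  shows "expect_prod U q m (\<lambda>x. exp (\<theta> * collision_stat h m x))
       \<le> exp (real (m div 2) * collision_prob U q h * (exp (\<theta> / real (m div 2)) - 1))"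
proof -
  define K where "K = m div 2"
  define P where "P = {\<sigma>. \<sigma> permutes {..<m}}"
  define g where "g = (\<lambda>u v. exp (\<theta> / real K * (if h u = h v then 1 else 0)))"
  define c where "c = (\<Sum>u\<in>U. \<Sum>v\<in>U. q u * q v * g u v)"
  let ?T = "\<lambda>\<sigma> x. \<Sum>r<K. if h (x (\<sigma> (2*r))) = h (x (\<sigma> (2*r+1))) then 1 else (0::real)"
  have pairs: "expect_prod U q m (\<lambda>x. exp (\<theta> / real K * ?T \<sigma> x)) = c ^ K" if "\<sigma> \<in> P" for \<sigma>
  proof -
    have "exp (\<theta> / real K * ?T \<sigma> x) = (\<lambda>y. \<Prod>r<K. g (y (2*r)) (y (2*r+1))) (x \<circ> \<sigma>)" for x
      unfolding g_def by (simp add: sum_distrib_left exp_sum)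
    then have "expect_prod U q m (\<lambda>x. exp (\<theta> / real K * ?T \<sigma> x))
        = expect_prod U q m (\<lambda>y. \<Prod>r<K. g (y (2*r)) (y (2*r+1)))"
      using expect_prod_permute[of \<sigma> m U q "\<lambda>y. \<Prod>r<K. g (y (2*r)) (y (2*r+1))"] that
      unfolding P_def by simp
    also have "\<dots> = c ^ K"
      unfolding c_def using U q1 by (rule expect_prod_pairs) (simp add: K_def)
    finally show ?thesis .
  qed
  have "finite P"
    unfolding P_def by (simp add: finite_permutations)
  have "c \<ge> 0"
    unfolding c_def g_def using q0 by (intro sum_nonneg mult_nonneg_nonneg) auto
  then have "c ^ K \<le> exp (collision_prob U q h * (exp (\<theta> / real K) - 1)) ^ K"
    using collision_pair_exp_le[OF q1] unfolding c_def g_def by (intro power_mono)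
  also have "\<dots> = exp (real K * collision_prob U q h * (exp (\<theta> / real K) - 1))"
    by (simp add: exp_of_nat_mult[symmetric] mult_ac)
  finally have cK: "c ^ K \<le> exp (real K * collision_prob U q h * (exp (\<theta> / real K) - 1))" .
  have "expect_prod U q m (\<lambda>x. exp (\<theta> * collision_stat h m x))
      \<le> expect_prod U q m (\<lambda>x. \<Sum>\<sigma>\<in>P. (1 / fact m) * exp (\<theta> / real K * ?T \<sigma> x))"
    using q0 exp_collision_stat_le_permutation_average[OF m] unfolding P_def K_def
    by (rule expect_prod_mono)
  also have "\<dots> = (\<Sum>\<sigma>\<in>P. (1 / fact m) * c ^ K)"
    unfolding expect_prod_sum[OF \<open>finite P\<close>] expect_prod_cmult
    by (rule sum.cong[OF refl]) (simp only: pairs)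
  also have "\<dots> = c ^ K" unfolding P_def by (simp add: card_permutations)
  finally show ?thesis using cK unfolding K_def by simp
qed

lemma prob_prod_abs_diff_le_ge:
  assumes U: "finite U" and q0: "\<forall>u\<in>U. q u \<ge> 0" and q1: "(\<Sum>u\<in>U. q u) = 1"
    and "\<theta> \<ge> 0"
  shows "prob_prod U q m (\<lambda>x. \<bar>Z x - a\<bar> \<le> b)
       \<ge> 1 - exp (- \<theta> * b) * (expect_prod U q m (\<lambda>x. exp (\<theta> * (Z x - a)))
                                + expect_prod U q m (\<lambda>x. exp (- \<theta> * (Z x - a))))"
proof -
  define E1 where "E1 = (\<lambda>x. exp (- \<theta> * b) * exp (\<theta> * (Z x - a)))"
  define E2 where "E2 = (\<lambda>x. exp (- \<theta> * b) * exp (- \<theta> * (Z x - a)))"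
  have "1 - (E1 x + E2 x) \<le> (if \<bar>Z x - a\<bar> \<le> b then 1 else 0)" for x
  proof -
    have "E1 x > 0" "E2 x > 0" unfolding E1_def E2_def by auto
    moreover
    have "E1 x \<ge> 1 \<or> E2 x \<ge> 1" if "\<not> \<bar>Z x - a\<bar> \<le> b"
    proof -
      from that have "Z x - a - b \<ge> 0 \<or> - (Z x - a) - b \<ge> 0" by linarith
      then have "\<theta> * (Z x - a - b) \<ge> 0 \<or> \<theta> * (- (Z x - a) - b) \<ge> 0"
        using \<open>\<theta> \<ge> 0\<close> by auto
      then show ?thesis
        unfolding E1_def E2_def by (auto simp flip: exp_add simp: algebra_simps)
    qed
    ultimately show ?thesis by auto
  qed
  then have "expect_prod U q m (\<lambda>x. 1 - (E1 x + E2 x))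
      \<le> expect_prod U q m (\<lambda>x. if \<bar>Z x - a\<bar> \<le> b then 1 else 0)"
    using q0 by (intro expect_prod_mono)
  then show ?thesis
    unfolding prob_prod_eq_expect_prod[OF U] expect_prod_diff expect_prod_add E1_def E2_def
      expect_prod_cmult expect_prod_const[OF U q1]
    by (simp add: distrib_left)
qed

lemma exp_le_quadratic:
  fixes x :: real
  assumes "\<bar>x\<bar> \<le> 1"
  shows "exp x \<le> 1 + x + x\<^sup>2"
proof (cases "x \<ge> 0")
  case True
  then show ?thesis using assms exp_bound by simp
next
  case False
  have "exp x = 1 / exp (- x)" by (simp add: exp_minus field_simps)
  also have "\<dots> \<le> 1 / (1 - x)"
    using False exp_minus_ge[of x] by (intro divide_left_mono) auto
  also have "\<dots> \<le> 1 + x + x\<^sup>2"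
  proof -
    have "1 \<le> (1 + x + x\<^sup>2) * (1 - x)"
      using False mult_nonpos_nonneg[of x "x * x"] by (simp add: algebra_simps power2_eq_square)
    then show ?thesis using False by (simp add: divide_le_eq)
  qed
  finally show ?thesis .
qed

lemma expect_prod_exp_centered_collision_stat_le:
  fixes h :: "'u \<Rightarrow> 'b"
  assumes U: "finite U" and q0: "\<forall>u\<in>U. q u \<ge> 0" and q1: "(\<Sum>u\<in>U. q u) = 1"
    and m: "m \<ge> 2" and "\<bar>\<eta>\<bar> \<le> 1"
  defines "K \<equiv> real (m div 2)" and "s \<equiv> collision_prob U q h"
  shows "expect_prod U q m (\<lambda>x. exp (\<eta> * K * (collision_stat h m x - s))) \<le> exp (K * s * \<eta>\<^sup>2)"
proof -
  have "K > 0" using m by (simp add: K_def)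
  have "s \<ge> 0"
    unfolding s_def collision_prob_def using q0 by (intro sum_nonneg mult_nonneg_nonneg) auto
  have "(\<lambda>x. exp (\<eta> * K * (collision_stat h m x - s)))
      = (\<lambda>x. exp (- (\<eta> * K * s)) * exp (\<eta> * K * collision_stat h m x))"
    by (simp add: algebra_simps flip: exp_add)
  then have "expect_prod U q m (\<lambda>x. exp (\<eta> * K * (collision_stat h m x - s)))
      = exp (- (\<eta> * K * s)) * expect_prod U q m (\<lambda>x. exp (\<eta> * K * collision_stat h m x))"
    by (simp add: expect_prod_cmult)
  also have "\<dots> \<le> exp (- (\<eta> * K * s)) * exp (K * s * (exp \<eta> - 1))"
    using expect_prod_exp_collision_stat_le[OF U q0 q1 m, of "\<eta> * K" h] \<open>K > 0\<close>
    unfolding K_def s_def by (intro mult_left_mono) simp_all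
  also have "\<dots> = exp (K * s * (exp \<eta> - 1 - \<eta>))"
    by (simp add: algebra_simps flip: exp_add)
  also have "\<dots> \<le> exp (K * s * \<eta>\<^sup>2)"
    using exp_le_quadratic[OF \<open>\<bar>\<eta>\<bar> \<le> 1\<close>] \<open>K > 0\<close> \<open>s \<ge> 0\<close> by (simp add: mult_left_mono)
  finally show ?thesis .
qed

lemma collision_stat_concentration:
  fixes h :: "'u \<Rightarrow> 'b"
  assumes U: "finite U" and q0: "\<forall>u\<in>U. q u \<ge> 0" and q1: "(\<Sum>u\<in>U. q u) = 1"
    and m: "m \<ge> 2" and "0 < \<epsilon>" "\<epsilon> \<le> 1"
  defines "K \<equiv> real (m div 2)" and "s \<equiv> collision_prob U q h"
  shows "prob_prod U q m (\<lambda>x. \<bar>collision_stat h m x - s\<bar> \<le> t * s)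
       \<ge> 1 - 2 * exp (- (K * s * \<epsilon> * (t - \<epsilon>)))"
proof -
  have "K > 0" using m by (simp add: K_def)
  have mgf: "expect_prod U q m (\<lambda>x. exp (\<eta> * K * (collision_stat h m x - s))) \<le> exp (K * s * \<epsilon>\<^sup>2)"
    if "\<bar>\<eta>\<bar> = \<epsilon>" for \<eta>
    using expect_prod_exp_centered_collision_stat_le[OF U q0 q1 m, of \<eta> h] that \<open>\<epsilon> \<le> 1\<close>
      power2_abs[of \<eta>] unfolding K_def s_def by simp
  have "1 - 2 * exp (- (K * s * \<epsilon> * (t - \<epsilon>))) = 1 - exp (- (\<epsilon> * K) * (t * s)) * (2 * exp (K * s * \<epsilon>\<^sup>2))"
    by (simp add: algebra_simps power2_eq_square flip: exp_add)
  also have "\<dots> \<le> 1 - exp (- (\<epsilon> * K) * (t * s))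
      * (expect_prod U q m (\<lambda>x. exp (\<epsilon> * K * (collision_stat h m x - s)))
         + expect_prod U q m (\<lambda>x. exp (- (\<epsilon> * K) * (collision_stat h m x - s))))"
    using mgf[of \<epsilon>] mgf[of "- \<epsilon>"] \<open>0 < \<epsilon>\<close> by (intro diff_left_mono mult_left_mono) simp_all
  also have "\<dots> \<le> prob_prod U q m (\<lambda>x. \<bar>collision_stat h m x - s\<bar> \<le> t * s)"
    using \<open>0 < \<epsilon>\<close> \<open>K > 0\<close> by (intro prob_prod_abs_diff_le_ge[OF U q0 q1]) simp
  finally show ?thesis .
qed

lemma real_kcount: "real (kcount h m x i) = (\<Sum>j<m. if h (x j) = i then 1 else 0)"
  unfolding kcount_def using sum.inter_filter[of "{..<m}" "\<lambda>_. 1 :: real" "\<lambda>j. h (x j) = i"] by simp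

lemma collision_stat_eq_sum_kcount:
  assumes "\<forall>j<m. h (x j) \<in> {1..n}"
  shows "collision_stat h m x
       = (\<Sum>i=1..n. real (kcount h m x i) * (real (kcount h m x i) - 1) / (real m * (real m - 1)))"
proof -
  let ?a = "\<lambda>i j. if h (x j) = i then 1 else (0::real)"
  have pairs_in_bin: "real (kcount h m x i) * (real (kcount h m x i) - 1)
      = (\<Sum>j<m. \<Sum>l\<in>{..<m}-{j}. ?a i j * ?a i l)" for i
  proof -
    have "(\<Sum>l\<in>{..<m}-{j}. ?a i j * ?a i l) = ?a i j * (real (kcount h m x i) - 1)" if "j < m" for j
      using that by (simp add: sum_distrib_left[symmetric] sum_diff1 real_kcount)
    then show ?thesis by (simp add: sum_distrib_right[symmetric] real_kcount)
  qed
  have same_bin: "(\<Sum>i=1..n. ?a i j * ?a i l) = (if h (x j) = h (x l) then 1 else 0)" if "j < m" for j l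
  proof -
    have "(\<Sum>i=1..n. ?a i j * ?a i l) = (\<Sum>i=1..n. if i = h (x j) then (if h (x j) = h (x l) then 1 else 0) else 0)"
      by (intro sum.cong) auto
    then show ?thesis using assms that by simp
  qed
  have "(\<Sum>i=1..n. real (kcount h m x i) * (real (kcount h m x i) - 1))
      = (\<Sum>j<m. \<Sum>l\<in>{..<m}-{j}. \<Sum>i=1..n. ?a i j * ?a i l)"
    unfolding pairs_in_bin by (subst sum.swap) (rule sum.cong[OF refl], rule sum.swap)
  also have "\<dots> = (\<Sum>j<m. \<Sum>l\<in>{..<m}-{j}. if h (x j) = h (x l) then 1 else 0)"
    by (intro sum.cong refl same_bin) simp
  finally show ?thesis
    unfolding collision_stat_def sum_divide_distrib[symmetric] by simp
qed

lemma prob_prod_relative_error_eq: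
  assumes "\<forall>u\<in>U. h u \<in> {1..n}" and "psqnorm U q h n > 0"
  shows "prob_prod U q m (\<lambda>x. \<bar>(\<Sum>i=1..n. real (kcount h m x i) * (real (kcount h m x i) - 1)
              / (real m * (real m - 1))) * (1 / psqnorm U q h n) - 1\<bar> \<le> t)
       = prob_prod U q m (\<lambda>x. \<bar>collision_stat h m x - psqnorm U q h n\<bar> \<le> t * psqnorm U q h n)"
    (is "prob_prod U q m ?event = prob_prod U q m ?deviation")
proof (rule prob_prod_cong)
  fix x assume "x \<in> PiE {..<m} (\<lambda>_. U)"
  then have "\<forall>j<m. h (x j) \<in> {1..n}" using assms(1) by (auto simp: PiE_iff)
  then have "(\<Sum>i=1..n. real (kcount h m x i) * (real (kcount h m x i) - 1) / (real m * (real m - 1)))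
      = collision_stat h m x"
    by (rule collision_stat_eq_sum_kcount[symmetric])
  then show "?event x = ?deviation x"
    using assms(2) by (simp add: abs_le_iff field_simps)
qed

lemma sum_pbin_mult:
  assumes "finite U" and "\<forall>u\<in>U. h u \<in> {1..n}"
  shows "(\<Sum>i=1..n. pbin U q h i * f i) = (\<Sum>u\<in>U. q u * f (h u))"
proof -
  have "(\<Sum>i=1..n. pbin U q h i * f i) = (\<Sum>i=1..n. \<Sum>u\<in>U. if h u = i then q u * f i else 0)"
    unfolding pbin_def sum_distrib_right sum.inter_filter[OF assms(1)] by (intro sum.cong refl) simp
  also have "\<dots> = (\<Sum>u\<in>U. q u * f (h u))"
    using assms(2) by (subst sum.swap) (intro sum.cong refl, simp add: sum.delta')
  finally show ?thesis .
qed

lemma collision_prob_eq_psqnorm: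
  assumes "finite U" and "\<forall>u\<in>U. h u \<in> {1..n}"
  shows "collision_prob U q h = psqnorm U q h n"
proof -
  have "psqnorm U q h n = (\<Sum>u\<in>U. q u * pbin U q h (h u))"
    unfolding psqnorm_def power2_eq_square by (rule sum_pbin_mult[OF assms])
  also have "\<dots> = collision_prob U q h"
    unfolding collision_prob_def pbin_def sum_distrib_left sum.inter_filter[OF assms(1)]
    by (intro sum.cong) auto
  finally show ?thesis ..
qed

lemma psqnorm_ge_inverse:
  assumes "finite U" and "\<forall>u\<in>U. h u \<in> {1..n}" and "(\<Sum>u\<in>U. q u) = 1" and "n > 0"
  shows "psqnorm U q h n \<ge> 1 / real n"
proof -
  have total: "(\<Sum>i=1..n. pbin U q h i) = 1"
    using sum_pbin_mult[OF assms(1,2), of q "\<lambda>_. 1"] assms(3) by simp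
  have "0 \<le> (\<Sum>i=1..n. (pbin U q h i - 1 / real n)\<^sup>2)"
    by (rule sum_nonneg) simp
  also have "\<dots> = psqnorm U q h n - 2 / real n * (\<Sum>i=1..n. pbin U q h i) + real n * (1 / real n)\<^sup>2"
    unfolding psqnorm_def by (simp add: power2_diff sum.distrib sum_subtractf sum_distrib_left mult_ac)
  also have "\<dots> = psqnorm U q h n - 1 / real n"
    unfolding total using assms(4) by (simp add: power2_eq_square)
  finally show ?thesis by simp
qed

lemma concentration_exponent_ge:
  fixes m n :: nat and \<epsilon> u s :: real
  assumes "\<epsilon>\<^sup>2 * real m = real n * u" and "0 < \<epsilon>" "\<epsilon> < 1"
    and "u \<ge> 1" "n \<ge> 2" and "s \<ge> 1 / real n"
  shows "2 * u \<le> real (m div 2) * s * \<epsilon> * (22 * \<epsilon> - \<epsilon>)"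
proof -
  have "real n * u \<ge> 2" using assms(4,5) mult_mono[of 2 "real n" 1 u] by simp
  moreover have "\<epsilon>\<^sup>2 < 1" using assms(2,3) by (simp add: power_less_one_iff)
  ultimately have "2 * u \<le> 21 * \<epsilon>\<^sup>2 * ((real m - 1) / (2 * real n))"
    using assms(1,5) by (simp add: field_simps)
  also have "\<dots> \<le> 21 * \<epsilon>\<^sup>2 * (real (m div 2) * s)"
  proof (rule mult_left_mono)
    have "real m - 1 \<le> 2 * real (m div 2)" by linarith
    then show "(real m - 1) / (2 * real n) \<le> real (m div 2) * s"
      using assms(5,6) mult_mono[of "(real m - 1) / 2" "real (m div 2)" "1 / real n" s]
      by (simp add: field_simps)
  qed simp
  finally show ?thesis by (simp add: power2_eq_square algebra_simps)
qed

lemma two_exp_minus_double_le: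
  fixes u :: real
  assumes "u \<ge> 1"
  shows "2 * exp (- 2 * u) \<le> 10/9 * exp (- u)"
proof -
  have "exp (- u) \<le> exp (- 1)" using assms by simp
  also have "\<dots> \<le> 1 / 2" using exp_ge_add_one_self[of 1] by (simp add: exp_minus field_simps)
  finally have "2 * exp (- u) * exp (- u) \<le> exp (- u)"
    using mult_right_mono[of "exp (- u)" "1 / 2" "exp (- u)"] by simp
  moreover have "exp (- 2 * u) = exp (- u) * exp (- u)" by (simp flip: exp_add)
  ultimately show ?thesis using exp_gt_zero[of "- u"] by linarith
qed

theorem corollary1:
  fixes U :: "'u set" and q :: "'u \<Rightarrow> real" and h :: "'u \<Rightarrow> nat"
    and n m :: nat and \<epsilon> \<delta> :: real
  assumes "finite U"
    and "\<forall>u\<in>U. q u \<ge> 0" and "(\<Sum>u\<in>U. q u) = 1"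
    and "\<forall>u\<in>U. h u \<in> {1..n}"
    and "n > 24" and "0 < \<epsilon>" and "\<epsilon> < 1/3" and "\<delta> > 0"
    and "real m = \<epsilon> powr (-2) * real n powr (1 + \<delta>)"
  shows "prob_prod U q m (\<lambda>x. \<bar>(\<Sum>i=1..n. real (kcount h m x i) * (real (kcount h m x i) - 1)
              / (real m * (real m - 1))) * (1 / psqnorm U q h n) - 1\<bar> \<le> 22 * \<epsilon>)
         \<ge> 1 - 10/9 * exp (- (real n powr \<delta>))"
proof -
  define s where "s = psqnorm U q h n"
  define u where "u = real n powr \<delta>"
  have s: "s \<ge> 1 / real n"
    unfolding s_def using psqnorm_ge_inverse[OF assms(1,4,3)] assms(5) by simp
  then have "s > 0" by (rule less_le_trans[rotated]) (use assms(5) in simp)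
  have u: "u \<ge> 1" unfolding u_def using assms(5,8) by (intro ge_one_powr_ge_zero) auto
  have m_eq: "\<epsilon>\<^sup>2 * real m = real n * u"
    using assms(5,6,9) unfolding u_def by (simp add: powr_add powr_minus power2_eq_square field_simps)
  have "m \<ge> 2"
  proof -
    have "\<epsilon>\<^sup>2 * real m \<ge> 2" using m_eq u assms(5) mult_mono[of 2 "real n" 1 u] by simp
    moreover have "\<epsilon>\<^sup>2 < 1" using assms(6,7) by (simp add: power_less_one_iff)
    ultimately show ?thesis using mult_right_mono[of "\<epsilon>\<^sup>2" 1 "real m"] by linarith
  qed
  have "1 - 10/9 * exp (- u) \<le> 1 - 2 * exp (- 2 * u)"
    using two_exp_minus_double_le[OF u] by simp
  also have "\<dots> \<le> 1 - 2 * exp (- (real (m div 2) * s * \<epsilon> * (22 * \<epsilon> - \<epsilon>)))"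
    using concentration_exponent_ge[OF m_eq assms(6) _ u _ s] assms(5,7) by simp
  also have "\<dots> \<le> prob_prod U q m (\<lambda>x. \<bar>collision_stat h m x - s\<bar> \<le> 22 * \<epsilon> * s)"
    using collision_stat_concentration[OF assms(1-3) \<open>m \<ge> 2\<close> assms(6), where h = h and t = "22 * \<epsilon>"]
      assms(7) collision_prob_eq_psqnorm[OF assms(1,4), of q] unfolding s_def by simp
  finally show ?thesis
    unfolding prob_prod_relative_error_eq[OF assms(4) \<open>s > 0\<close>[unfolded s_def]] s_def u_def by simp
qed

end
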